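(* Assume the setting below. Let $X'\in[\underline X,\overline X]$ be arbitrary, let $\bm w'=\arg\min_{\bm w\in\mathbb{R}^d}P_{X'}(\bm w)$, and let $\bm\alpha'$ be a maximizer of $D_{X'}$ over its feasible set $\mathcal{A}$. Define $$\Delta:=\max_{X''\in[\underline X,\overline X]}P_{X''}(\bm w')-\min_{X''\in[\underline X,\overline X]}D_{X''}(\bm\alpha'),$$ and $\mathcal{W}:=\{\bm w\in\mathbb{R}^d:\|\bm w-\bm w'\|_2\le\sqrt{2\Delta/\lambda}\}$. Then $\mathcal{W}\supseteq\mathcal{W}^*$, where $$\mathcal{W}^*:=\Bigl\{\arg\min_{\bm w\in\mathbb{R}^d}P_{X''}(\bm w)\ :\ X''\in[\underline X,\overline X]\Bigr\}.$$
   Context: Data: an output vector $\bm y=(y_1,\dots,y_n)\in\mathcal{Y}^n$ with $\mathcal{Y}\subseteq\mathbb{R}$, and two matrices $\underline X,\overline X\in\mathbb{R}^{n\times d}$ with $\underline X\le\overline X$ entrywise; $[\underline X,\overline X]$ denotes the set of all $X''\in\mathbb{R}^{n\times d}$ with $\underline{x_{ij}}\le x''_{ij}\le\overline{x_{ij}}$ for all $i,j$. For a matrix $X$, $\bm x_{i\cdot}$ denotes its $i$-th row and $\bm x_{\cdot j}$ its $j$-th column. Loss: $\ell:\mathcal{Y}\times\mathbb{R}\to\mathbb{R}_{\ge0}$, convex in its second argument. Penalty: $\rho:\mathbb{R}^d\to\mathbb{R}_{\ge 0}$, $\lambda$-strongly convex for some $\lambda>0$ (i.e. for all $\bm u,\bm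 v$ and $t\in[0,1]$, $\rho(t\bm u+(1-t)\bm v)\le t\rho(\bm u)+(1-t)\rho(\bm v)-\frac{\lambda}{2}t(1-t)\|\bm u-\bm v\|_2^2$) and decomposable, i.e. $\rho(\bm w)=\sum_{j=1}^d\rho_j(w_j)$ with each $\rho_j:\mathbb{R}\to\mathbb{R}$ convex. Primal objective: $P_X(\bm w):=\frac1n\sum_{i=1}^n\ell(y_i,\bm w^\top\bm x_{i\cdot})+\rho(\bm w)$. Convex conjugates: for $\phi:\mathbb{R}^k\to\mathbb{R}$, $\phi^*(\bm v):=\sup_{\bm u}\{\bm u^\top\bm v-\phi(\bm u)\}$; $\ell^*(y,\cdot)$ denotes the conjugate of $\ell(y,\cdot)$ in the second argument. Dual objective: $D_X(\bm\alpha):=-\frac1n\sum_{i=1}^n\ell^*(y_i,-\alpha_i)-\rho^*(\frac1n X^\top\bm\alpha)$, defined on the feasible set $\mathcal{A}:=\{\bm\alpha\in\mathbb{R}^n:\ell^*(y_i,-\alpha_i)<\infty\ \forall i\}$ (note $\rho^*$ is finite on all of $\mathbb{R}^d$ by strong convexity). Standing assumptions: the minimizers and maximizers referred to exist, and strong duality $\max_{\bm\alpha\in\mathcal{A}}D_X(\bm\alpha)=\min_{\bm w}P_X(\bm w)$ holds for every $X\in[\underline X,\overline X]$. *)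

theory Defs
  imports "HOL-Analysis.Analysis"
begin

definition conj :: "('a::real_inner \<Rightarrow> real) \<Rightarrow> 'a \<Rightarrow> ereal" where
  "conj f v = (SUP u. ereal (inner u v - f u))"

definition strongly_convex :: "real \<Rightarrow> ('a::real_normed_vector \<Rightarrow> real) \<Rightarrow> bool" where
  "strongly_convex lam f \<longleftrightarrow>
     (\<forall>u v t. 0 \<le> t \<and> t \<le> 1 \<longrightarrow>
        f (t *\<^sub>R u + (1 - t) *\<^sub>R v) \<le> t * f u + (1 - t) * f v - lam / 2 * t * (1 - t) * (norm (u - v))\<^sup>2)"

definition mat_box :: "real^'d^'n \<Rightarrow> real^'d^'n \<Rightarrow> (real^'d^'n) set" where
  "mat_box Xl Xu = {X. \<forall>i j. Xl $ i $ j \<le> X $ i $ j \<and> X $ i $ j \<le> Xu $ i $ j}"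

definition primal :: "(real \<Rightarrow> real \<Rightarrow> real) \<Rightarrow> (real^'d \<Rightarrow> real) \<Rightarrow> real^'n
    \<Rightarrow> real^'d^'n \<Rightarrow> real^'d \<Rightarrow> real" where
  "primal l rho y X w = (1 / real CARD('n)) * (\<Sum>i\<in>UNIV. l (y $ i) (inner w (row i X))) + rho w"

definition dual_feasible :: "(real \<Rightarrow> real \<Rightarrow> real) \<Rightarrow> real^'n \<Rightarrow> (real^'n) set" where
  "dual_feasible l y = {alpha. \<forall>i. conj (l (y $ i)) (- alpha $ i) < \<infinity>}"

text \<open>Dual objective D_X(alpha) = -1/n sum_i l*(y_i,-alpha_i) - rho*(X^T alpha / n),
  taken as a real number (it is finite on the feasible set, as rho* is finite everywhere).\<close>
definition dual :: "(real \<Rightarrow> real \<Rightarrow> real) \<Rightarrow> (real^'d \<Rightarrow> real) \<Rightarrow> real^'n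
    \<Rightarrow> real^'d^'n \<Rightarrow> real^'n \<Rightarrow> real" where
  "dual l rho y X alpha =
     - (1 / real CARD('n)) * (\<Sum>i\<in>UNIV. real_of_ereal (conj (l (y $ i)) (- alpha $ i)))
     - real_of_ereal (conj rho ((1 / real CARD('n)) *\<^sub>R (transpose X *v alpha)))"

end

theory Submission
  imports Defs
begin

text \<open>For a box matrix \<open>X\<close> with primal minimizer \<open>w\<close>, \<open>\<lambda>\<close>-strong convexity of \<open>P_X\<close> gives
  \<open>\<lambda>/2 \<parallel>w' - w\<parallel>\<^sup>2 \<le> P_X(w') - P_X(w)\<close>. By strong duality \<open>P_X(w)\<close> is the maximum of \<open>D_X\<close>, so it
  is at least \<open>D_X(\<alpha>')\<close>, and the right-hand side is bounded by the sup of \<open>P(w')\<close> minus the inf of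
  \<open>D(\<alpha>')\<close> over the box, which is \<open>\<Delta>\<close>.\<close>

lemma convex_on_compose_linear:
  assumes "convex_on UNIV f" and "linear g"
  shows "convex_on UNIV (\<lambda>x. f (g x))"
proof (rule convex_onI)
  fix t :: real and x y
  assume "0 < t" "t < 1"
  then show "f (g ((1 - t) *\<^sub>R x + t *\<^sub>R y)) \<le> (1 - t) * f (g x) + t * f (g y)"
    using convex_onD[OF assms(1), of t "g x" "g y"]
    by (simp add: linear_add[OF assms(2)] linear_scale[OF assms(2)])
qed simp

lemma convex_on_sum_fun:
  assumes "finite I" and "convex S" and "\<And>i. i \<in> I \<Longrightarrow> convex_on S (f i)"
  shows "convex_on S (\<lambda>x. \<Sum>i\<in>I. f i x)"
  using assms by (induction I rule: finite_induct) (auto simp: convex_on_const)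

lemma strongly_convex_add_convex:
  assumes "convex_on UNIV g" and "strongly_convex lam f"
  shows "strongly_convex lam (\<lambda>x. g x + f x)"
  unfolding strongly_convex_def
proof (intro allI impI)
  fix u v and t :: real
  assume t: "0 \<le> t \<and> t \<le> 1"
  have "g (t *\<^sub>R u + (1 - t) *\<^sub>R v) \<le> t * g u + (1 - t) * g v"
    using convex_onD[OF assms(1), of t v u] t by (simp add: add.commute)
  moreover have "f (t *\<^sub>R u + (1 - t) *\<^sub>R v)
      \<le> t * f u + (1 - t) * f v - lam / 2 * t * (1 - t) * (norm (u - v))\<^sup>2"
    using assms(2) t unfolding strongly_convex_def by blast
  ultimately show "g (t *\<^sub>R u + (1 - t) *\<^sub>R v) + f (t *\<^sub>R u + (1 - t) *\<^sub>R v)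
      \<le> t * (g u + f u) + (1 - t) * (g v + f v) - lam / 2 * t * (1 - t) * (norm (u - v))\<^sup>2"
    by (simp add: algebra_simps)
qed

lemma strongly_convex_primal:
  assumes "\<And>i. convex_on UNIV (l (y $ i))" and "strongly_convex lam rho"
  shows "strongly_convex lam (primal l rho y X)"
proof -
  have "convex_on UNIV (\<lambda>w. l (y $ i) (inner w (row i X)))" for i
    by (rule convex_on_compose_linear[OF assms(1)]) (simp add: bounded_linear.linear bounded_linear_inner_left)
  then have "convex_on UNIV (\<lambda>w. 1 / real CARD('n) * (\<Sum>i\<in>UNIV. l (y $ i) (inner w (row i X))))"
    by (intro convex_on_cmul convex_on_sum_fun) auto
  from strongly_convex_add_convex[OF this assms(2)] show ?thesis
    unfolding primal_def[abs_def] .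
qed

lemma strongly_convex_minimizer_gap:
  assumes sc: "strongly_convex lam f" and min: "\<forall>v. f w \<le> f v"
  shows "lam / 2 * (norm (u - w))\<^sup>2 \<le> f u - f w"
proof (rule field_le_mult_one_interval)
  fix z :: real
  assume z: "0 < z" "z < 1"
  define t where "t = 1 - z"
  have t: "0 < t" "t \<le> 1" using z by (simp_all add: t_def)
  have "f w \<le> f (t *\<^sub>R u + (1 - t) *\<^sub>R w)" using min by blast
  also have "\<dots> \<le> t * f u + (1 - t) * f w - lam / 2 * t * (1 - t) * (norm (u - w))\<^sup>2"
    using sc t unfolding strongly_convex_def by simp
  finally have "t * (z * (lam / 2 * (norm (u - w))\<^sup>2)) \<le> t * (f u - f w)"
    by (simp add: t_def algebra_simps)
  then show "z * (lam / 2 * (norm (u - w))\<^sup>2) \<le> f u - f w"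
    using t by simp
qed

theorem theorem1:
  fixes Y :: "real set"
    and y :: "real^'n"
    and Xl Xu X' :: "real^'d^'n"
    and l :: "real \<Rightarrow> real \<Rightarrow> real"
    and rho :: "real^'d \<Rightarrow> real"
    and lam :: real
    and w' :: "real^'d"
    and alpha' :: "real^'n"
  assumes y_in: "\<forall>i. y $ i \<in> Y"
    and box_ok: "\<forall>i j. Xl $ i $ j \<le> Xu $ i $ j"
    and l_nonneg: "\<forall>a\<in>Y. \<forall>z. 0 \<le> l a z"
    and l_convex: "\<forall>a\<in>Y. convex_on UNIV (l a)"
    and rho_nonneg: "\<forall>w. 0 \<le> rho w"
    and lam_pos: "lam > 0"
    and rho_sc: "strongly_convex lam rho"
    and rho_dec: "\<exists>rj :: 'd \<Rightarrow> real \<Rightarrow> real. (\<forall>j. convex_on UNIV (rj j)) \<and>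
                    (\<forall>w. rho w = (\<Sum>j\<in>UNIV. rj j (w $ j)))"
    and strong_duality: "\<forall>X\<in>mat_box Xl Xu. \<exists>w alpha.
            alpha \<in> dual_feasible l y \<and>
            (\<forall>beta\<in>dual_feasible l y. dual l rho y X beta \<le> dual l rho y X alpha) \<and>
            (\<forall>v. primal l rho y X w \<le> primal l rho y X v) \<and>
            dual l rho y X alpha = primal l rho y X w"
    and X'_in: "X' \<in> mat_box Xl Xu"
    and w'_min: "\<forall>v. primal l rho y X' w' \<le> primal l rho y X' v"
    and alpha'_feas: "alpha' \<in> dual_feasible l y"
    and alpha'_max: "\<forall>beta\<in>dual_feasible l y. dual l rho y X' beta \<le> dual l rho y X' alpha'"
    and max_attained: "\<exists>X\<in>mat_box Xl Xu. \<forall>Z\<in>mat_box Xl Xu. primal l rho y Z w' \<le> primal l rho y X w'"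
    and min_attained: "\<exists>X\<in>mat_box Xl Xu. \<forall>Z\<in>mat_box Xl Xu. dual l rho y X alpha' \<le> dual l rho y Z alpha'"
  shows "let Delta = (SUP X\<in>mat_box Xl Xu. primal l rho y X w') - (INF X\<in>mat_box Xl Xu. dual l rho y X alpha');
             W = {w. norm (w - w') \<le> sqrt (2 * Delta / lam)};
             Wstar = {w. \<exists>X\<in>mat_box Xl Xu. \<forall>v. primal l rho y X w \<le> primal l rho y X v}
         in Wstar \<subseteq> W"
proof -
  define Delta where "Delta = (SUP X\<in>mat_box Xl Xu. primal l rho y X w') - (INF X\<in>mat_box Xl Xu. dual l rho y X alpha')"
  have primal_bdd: "bdd_above ((\<lambda>X. primal l rho y X w') ` mat_box Xl Xu)"
    using max_attained by (auto simp: bdd_above_def)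
  have dual_bdd: "bdd_below ((\<lambda>X. dual l rho y X alpha') ` mat_box Xl Xu)"
    using min_attained by (auto simp: bdd_below_def)
  have "norm (w - w') \<le> sqrt (2 * Delta / lam)"
    if X: "X \<in> mat_box Xl Xu" and w_min: "\<forall>v. primal l rho y X w \<le> primal l rho y X v" for X w
  proof -
    obtain w2 alpha where "alpha \<in> dual_feasible l y"
      and alpha_max: "\<forall>beta\<in>dual_feasible l y. dual l rho y X beta \<le> dual l rho y X alpha"
      and "\<forall>v. primal l rho y X w2 \<le> primal l rho y X v"
      and "dual l rho y X alpha = primal l rho y X w2"
      using strong_duality X by blast
    with w_min have "dual l rho y X alpha' \<le> primal l rho y X w"
      using alpha'_feas by (metis order_antisym)
    moreover have "lam / 2 * (norm (w' - w))\<^sup>2 \<le> primal l rho y X w' - primal l rho y X w"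
      using y_in l_convex by (intro strongly_convex_minimizer_gap strongly_convex_primal rho_sc w_min) auto
    moreover have "primal l rho y X w' \<le> (SUP X\<in>mat_box Xl Xu. primal l rho y X w')"
      by (rule cSUP_upper[OF X primal_bdd])
    moreover have "(INF X\<in>mat_box Xl Xu. dual l rho y X alpha') \<le> dual l rho y X alpha'"
      by (rule cINF_lower[OF dual_bdd X])
    ultimately have "lam / 2 * (norm (w - w'))\<^sup>2 \<le> Delta"
      unfolding Delta_def by (simp add: norm_minus_commute)
    then have "(norm (w - w'))\<^sup>2 \<le> 2 * Delta / lam"
      using lam_pos by (simp add: field_simps)
    then show ?thesis by (simp add: real_le_rsqrt)
  qed
  then show ?thesis unfolding Delta_def Let_def by blast
qed

end
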